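(* For every topological space $X$ the following are equivalent: (1) $\pi_0^{\mathrm{ps}}X$ is topological (its pseudotopology is the ultrafilter convergence of some topology); (2) $\pi_0^{\mathrm{ps}}X=\pi_0^{\mathrm{top}}X$ (the quotient pseudotopology on the set of path components equals the ultrafilter convergence of the quotient topology); (3) the natural projection $q_X\colon X\to\pi_0^{\mathrm{top}}X$ is biquotient.
   Context: For a set $X$, $U(X)$ is the set of ultrafilters on $X$, $\dot x$ the principal ultrafilter at $x$; for $f\colon X\to Y$, $f_*\mathscr F=\{S\subset Y:f^{-1}(S)\in\mathscr F\}$. A pseudotopological structure on $X$ is a relation $u\subset U(X)\times X$ containing all $(\dot x,x)$; write $\mathscr U\to x$. A topological space is regarded as a pseudotopological space via ultrafilter convergence. For a topological space $X$, $\pi_0^{\mathrm{ps}}X$ is the set of path components of $X$ with the final pseudotopology w.r.t. the projection $q_X$ (which assigns to each point its path component): $\mathscr U\to c$ iff $\mathscr U=\dot c$ or $\mathscr U=(q_X)_*\mathscr V$ and $c=q_X(x)$ for some ultrafilter $\mathscr V$ on $X$ converging to $x$. $\pi_0^{\mathrm{top}}X$ is the same set with the quotient topology w.r.t. $q_X$. A continuous surjection $f\colon X\to Y$ of topological spaces is biquotient if for every $y\in Y$ and every cover $\mathcal O$ of $f^{-1}(y)$ by open subsets of $X$, finitely many sets $f(O)$, $O\in\mathcal O$, cover some neighbourhood of $y$ in $Y$. *)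

theory Defs
  imports "HOL-Analysis.Analysis"
begin

definition is_ultrafilter_on :: "'a set \<Rightarrow> 'a set set \<Rightarrow> bool" where
  "is_ultrafilter_on S F \<longleftrightarrow>
     F \<subseteq> Pow S \<and> S \<in> F \<and> {} \<notin> F \<and>
     (\<forall>A B. A \<in> F \<and> A \<subseteq> B \<and> B \<subseteq> S \<longrightarrow> B \<in> F) \<and>
     (\<forall>A B. A \<in> F \<and> B \<in> F \<longrightarrow> A \<inter> B \<in> F) \<and>
     (\<forall>A. A \<subseteq> S \<longrightarrow> A \<in> F \<or> S - A \<in> F)"

definition principal_uf :: "'a set \<Rightarrow> 'a \<Rightarrow> 'a set set" where
  "principal_uf S x = {A. A \<subseteq> S \<and> x \<in> A}"

definition pushforward :: "'a set \<Rightarrow> 'b set \<Rightarrow> ('a \<Rightarrow> 'b) \<Rightarrow> 'a set set \<Rightarrow> 'b set set" where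
  "pushforward S T f F = {B. B \<subseteq> T \<and> {x \<in> S. f x \<in> B} \<in> F}"

text \<open>Ultrafilter convergence relation of a topological space (as a pseudotopology
  on its underlying set): U \<rightarrow> x iff every open neighbourhood of x belongs to U.\<close>
definition ultra_conv :: "'a topology \<Rightarrow> ('a set set \<times> 'a) set" where
  "ultra_conv T = {(U, x). is_ultrafilter_on (topspace T) U \<and> x \<in> topspace T \<and>
                     (\<forall>W. openin T W \<and> x \<in> W \<longrightarrow> W \<in> U)}"

definition pc_proj :: "'a topology \<Rightarrow> 'a \<Rightarrow> 'a set" where
  "pc_proj X x = path_component_of_set X x"

text \<open>pi_0^ps X: the final pseudotopology on the path components w.r.t. q_X.\<close>
definition pi0_ps :: "'a topology \<Rightarrow> ('a set set set \<times> 'a set) set" where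
  "pi0_ps X = {(U, c). is_ultrafilter_on (path_components_of X) U \<and> c \<in> path_components_of X \<and>
     (U = principal_uf (path_components_of X) c \<or>
      (\<exists>V x. (V, x) \<in> ultra_conv X \<and>
             U = pushforward (topspace X) (path_components_of X) (pc_proj X) V \<and>
             c = pc_proj X x))}"

definition pi0_top :: "'a topology \<Rightarrow> 'a set topology" where
  "pi0_top X = topology (\<lambda>W. W \<subseteq> path_components_of X \<and>
                               openin X {x \<in> topspace X. pc_proj X x \<in> W})"

definition biquotient_map :: "'a topology \<Rightarrow> 'b topology \<Rightarrow> ('a \<Rightarrow> 'b) \<Rightarrow> bool" where
  "biquotient_map X Y f \<longleftrightarrow>
     continuous_map X Y f \<and> f ` topspace X = topspace Y \<and>
     (\<forall>y \<in> topspace Y. \<forall>Cov. (\<forall>W \<in> Cov. openin X W) \<and>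
         {x \<in> topspace X. f x = y} \<subseteq> \<Union>Cov \<longrightarrow>
         (\<exists>Fin N. finite Fin \<and> Fin \<subseteq> Cov \<and> openin Y N \<and> y \<in> N \<and>
                 N \<subseteq> (\<Union>W \<in> Fin. f ` W)))"

end

(*
  Write q for the projection of X onto its set of path components. The final pseudotopology
  of q consists of the images of convergent ultrafilters on X; it is contained in the
  ultrafilter convergence of every topology making q continuous, in particular of the
  quotient topology. A topology inducing the final pseudotopology makes q continuous, hence
  is coarser than the quotient topology, so its convergence also contains that of the
  quotient topology: this gives (1) <-> (2).

  For (2) <-> (3): a continuous surjection f : X -> Y is biquotient iff every ultrafilter
  converging to y in Y is the image of an ultrafilter converging to a point of the fibre
  over y. If some open cover of the fibre has no finite subfamily whose images cover a
  neighbourhood of y, the neighbourhoods of y and the complements of the images of the cover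
  generate an ultrafilter converging to y that cannot lift. Conversely, the biquotient
  property yields a point of the fibre all of whose neighbourhoods have images in the given
  ultrafilter, and the neighbourhoods of that point together with the preimages of the
  ultrafilter generate a lift.
*)
theory Submission
  imports Defs
begin

section \<open>Ultrafilters on a set\<close>

lemma is_ultrafilter_onI:
  assumes "U \<subseteq> Pow S" "S \<in> U" "{} \<notin> U"
    "\<And>A B. A \<in> U \<Longrightarrow> A \<subseteq> B \<Longrightarrow> B \<subseteq> S \<Longrightarrow> B \<in> U"
    "\<And>A B. A \<in> U \<Longrightarrow> B \<in> U \<Longrightarrow> A \<inter> B \<in> U"
    "\<And>A. A \<subseteq> S \<Longrightarrow> A \<in> U \<or> S - A \<in> U"
  shows "is_ultrafilter_on S U"
  unfolding is_ultrafilter_on_def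
  by (intro conjI allI impI; (elim conjE)?) (fact | rule assms; assumption)+

lemma
  assumes "is_ultrafilter_on S U"
  shows ultrafilter_on_subset: "A \<in> U \<Longrightarrow> A \<subseteq> S"
    and ultrafilter_on_top: "S \<in> U"
    and ultrafilter_on_empty: "{} \<notin> U"
    and ultrafilter_on_mono: "A \<in> U \<Longrightarrow> A \<subseteq> B \<Longrightarrow> B \<subseteq> S \<Longrightarrow> B \<in> U"
    and ultrafilter_on_Int: "A \<in> U \<Longrightarrow> B \<in> U \<Longrightarrow> A \<inter> B \<in> U"
    and ultrafilter_on_Diff: "A \<subseteq> S \<Longrightarrow> A \<in> U \<or> S - A \<in> U"
  by (insert assms, unfold is_ultrafilter_on_def) (elim conjE, blast)+

lemma ultrafilter_on_not_Diff:
  assumes "is_ultrafilter_on S U" "A \<in> U"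
  shows "S - A \<notin> U"
proof
  assume "S - A \<in> U"
  with assms(2) have "A \<inter> (S - A) \<in> U" by (rule ultrafilter_on_Int[OF assms(1)])
  then show False using ultrafilter_on_empty[OF assms(1)] by simp
qed

lemma ultrafilter_on_Un:
  assumes U: "is_ultrafilter_on S U" and "A \<subseteq> S" "B \<subseteq> S" "A \<union> B \<in> U"
  shows "A \<in> U \<or> B \<in> U"
proof (rule ccontr)
  assume "\<not> (A \<in> U \<or> B \<in> U)"
  then have "S - A \<in> U" "S - B \<in> U" using ultrafilter_on_Diff[OF U] assms(2,3) by blast+
  then have "(S - A) \<inter> (S - B) \<inter> (A \<union> B) \<in> U"
    using assms(4) ultrafilter_on_Int[OF U] by blast
  moreover have "(S - A) \<inter> (S - B) \<inter> (A \<union> B) = {}" by blast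
  ultimately show False using ultrafilter_on_empty[OF U] by simp
qed

lemma ultrafilter_on_finite_UN:
  assumes U: "is_ultrafilter_on S U" and "finite I" "\<And>i. i \<in> I \<Longrightarrow> g i \<subseteq> S"
    and "(\<Union>i\<in>I. g i) \<in> U"
  shows "\<exists>i\<in>I. g i \<in> U"
  using assms(2-)
proof (induction I rule: finite_induct)
  case empty
  then show ?case using ultrafilter_on_empty[OF U] by simp
next
  case (insert j I)
  then have "g j \<in> U \<or> (\<Union>i\<in>I. g i) \<in> U" by (intro ultrafilter_on_Un[OF U]) auto
  then show ?case using insert by auto
qed

lemma ultrafilter_on_finite_Inter:
  assumes U: "is_ultrafilter_on S U" and "finite G" "G \<subseteq> U"
  shows "S \<inter> \<Inter>G \<in> U"
  using assms(2,3)
proof (induction G rule: finite_induct)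
  case empty
  then show ?case using ultrafilter_on_top[OF U] by simp
next
  case (insert A G)
  then have "A \<inter> (S \<inter> \<Inter>G) \<in> U" by (auto intro: ultrafilter_on_Int[OF U])
  then show ?case by (simp add: Int_left_commute)
qed

lemma ultrafilter_on_eq_if_subset:
  assumes U: "is_ultrafilter_on S U" and U': "is_ultrafilter_on S U'" and "U \<subseteq> U'"
  shows "U = U'"
proof
  show "U' \<subseteq> U"
  proof
    fix A assume A: "A \<in> U'"
    then have "S - A \<notin> U" using ultrafilter_on_not_Diff[OF U'] assms(3) by blast
    then show "A \<in> U" using ultrafilter_on_Diff[OF U ultrafilter_on_subset[OF U' A]] by blast
  qed
qed fact

lemma ultrafilter_on_principal: "x \<in> S \<Longrightarrow> is_ultrafilter_on S (principal_uf S x)"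
  unfolding is_ultrafilter_on_def principal_uf_def by auto

definition fip_on :: "'a set \<Rightarrow> 'a set set \<Rightarrow> bool" where
  "fip_on S G \<longleftrightarrow> (\<forall>F. finite F \<and> F \<subseteq> G \<longrightarrow> S \<inter> \<Inter>F \<noteq> {})"

lemma fip_on_insert:
  assumes "fip_on S M" "\<And>F. finite F \<Longrightarrow> F \<subseteq> M \<Longrightarrow> S \<inter> \<Inter>F \<inter> A \<noteq> {}"
  shows "fip_on S (insert A M)"
  unfolding fip_on_def
proof (intro allI impI)
  fix F assume "finite F \<and> F \<subseteq> insert A M"
  then have "S \<inter> \<Inter>(F - {A}) \<inter> A \<noteq> {}" using assms(2)[of "F - {A}"] by blast
  then show "S \<inter> \<Inter>F \<noteq> {}" by blast
qed

lemma fip_on_maximal_exists: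
  assumes "B \<subseteq> Pow S" "fip_on S B"
  obtains M where "B \<subseteq> M" "M \<subseteq> Pow S" "fip_on S M"
    "\<And>A. A \<subseteq> S \<Longrightarrow> fip_on S (insert A M) \<Longrightarrow> A \<in> M"
proof -
  let ?A = "{G. B \<subseteq> G \<and> G \<subseteq> Pow S \<and> fip_on S G}"
  have "\<exists>M\<in>?A. \<forall>G\<in>?A. M \<subseteq> G \<longrightarrow> G = M"
  proof (rule subset_Zorn_nonempty)
    show "?A \<noteq> {}" using assms by blast
  next
    fix C assume C: "C \<noteq> {}" "subset.chain ?A C"
    then have CA: "C \<subseteq> ?A" by (simp add: subset.chain_def)
    have "fip_on S (\<Union>C)" unfolding fip_on_def
    proof (intro allI impI)
      fix F assume F: "finite F \<and> F \<subseteq> \<Union>C"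
      obtain G where "G \<in> C" "F \<subseteq> G"
        using finite_subset_Union_chain[OF conjunct1[OF F] conjunct2[OF F] C] .
      moreover from \<open>G \<in> C\<close> have "fip_on S G" using CA by blast
      ultimately show "S \<inter> \<Inter>F \<noteq> {}" using F unfolding fip_on_def by blast
    qed
    moreover have "B \<subseteq> \<Union>C" "\<Union>C \<subseteq> Pow S" using C(1) CA by blast+
    ultimately show "\<Union>C \<in> ?A" by blast
  qed
  then obtain M where MA: "M \<in> ?A" and max: "\<forall>G\<in>?A. M \<subseteq> G \<longrightarrow> G = M"
    by (rule bexE)
  from MA have M: "B \<subseteq> M" "M \<subseteq> Pow S" "fip_on S M" by simp_all
  show thesis
  proof (rule that[OF M])
    fix A assume "A \<subseteq> S" "fip_on S (insert A M)"
    then have "insert A M \<in> ?A" using M by auto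
    then have "insert A M = M" by (rule bspec[OF max, THEN mp]) (rule subset_insertI)
    then show "A \<in> M" by blast
  qed
qed

lemma ultrafilter_if_fip_on_maximal:
  assumes M: "M \<subseteq> Pow S" "fip_on S M"
    and max: "\<And>A. A \<subseteq> S \<Longrightarrow> fip_on S (insert A M) \<Longrightarrow> A \<in> M"
  shows "is_ultrafilter_on S M"
proof -
  have fip: "S \<inter> \<Inter>F \<noteq> {}" if "finite F" "F \<subseteq> M" for F
    using M(2) that unfolding fip_on_def by blast
  have absorb: "A \<in> M" if "A \<subseteq> S" "\<And>F. finite F \<Longrightarrow> F \<subseteq> M \<Longrightarrow> S \<inter> \<Inter>F \<inter> A \<noteq> {}" for A
    using max fip_on_insert[OF M(2)] that by blast
  have top: "S \<in> M" using fip by (intro absorb) auto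
  have empty: "{} \<notin> M" using fip[of "{{}}"] by auto
  have up: "C \<in> M" if "A \<in> M" "A \<subseteq> C" "C \<subseteq> S" for A C
  proof (rule absorb)
    fix F assume "finite F" "F \<subseteq> M"
    then have "S \<inter> \<Inter>(insert A F) \<noteq> {}" using that by (intro fip) auto
    then show "S \<inter> \<Inter>F \<inter> C \<noteq> {}" using that by blast
  qed fact
  have int: "A \<inter> C \<in> M" if "A \<in> M" "C \<in> M" for A C
  proof (rule absorb)
    fix F assume "finite F" "F \<subseteq> M"
    then have "S \<inter> \<Inter>(insert A (insert C F)) \<noteq> {}" using that by (intro fip) auto
    then show "S \<inter> \<Inter>F \<inter> (A \<inter> C) \<noteq> {}" by blast
  qed (use that M(1) in blast)
  have compl: "A \<in> M \<or> S - A \<in> M" if A: "A \<subseteq> S" for A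
  proof (rule ccontr)
    assume "\<not> (A \<in> M \<or> S - A \<in> M)"
    then obtain F1 F2 where F: "finite F1" "F1 \<subseteq> M" "S \<inter> \<Inter>F1 \<inter> A = {}"
      "finite F2" "F2 \<subseteq> M" "S \<inter> \<Inter>F2 \<inter> (S - A) = {}"
      using absorb[OF A] absorb[of "S - A"] by (metis Diff_subset)
    have "S \<inter> \<Inter>(F1 \<union> F2) \<noteq> {}" using F by (intro fip) auto
    then show False using F(3,6) by blast
  qed
  show ?thesis by (rule is_ultrafilter_onI[OF M(1) top empty up int compl])
qed

lemma ultrafilter_extending_fip_on:
  assumes "B \<subseteq> Pow S" "fip_on S B"
  obtains U where "is_ultrafilter_on S U" "B \<subseteq> U"
proof (rule fip_on_maximal_exists[OF assms])
  fix M assume "B \<subseteq> M" "M \<subseteq> Pow S" "fip_on S M"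
    "\<And>A. A \<subseteq> S \<Longrightarrow> fip_on S (insert A M) \<Longrightarrow> A \<in> M"
  then show thesis by (intro that[of M] ultrafilter_if_fip_on_maximal)
qed

lemma mem_pushforward: "B \<in> pushforward S T f V \<longleftrightarrow> B \<subseteq> T \<and> {x \<in> S. f x \<in> B} \<in> V"
  by (simp add: pushforward_def)

lemma ultrafilter_on_pushforward:
  assumes f: "f ` S \<subseteq> T" and V: "is_ultrafilter_on S V"
  shows "is_ultrafilter_on T (pushforward S T f V)"
proof (rule is_ultrafilter_onI)
  have "{x \<in> S. f x \<in> T} = S" using f by blast
  then show "T \<in> pushforward S T f V" using ultrafilter_on_top[OF V] by (simp add: mem_pushforward)
next
  fix A B assume "A \<in> pushforward S T f V" "A \<subseteq> B" "B \<subseteq> T"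
  then show "B \<in> pushforward S T f V"
    unfolding mem_pushforward by (blast intro: ultrafilter_on_mono[OF V])
next
  fix A B assume "A \<in> pushforward S T f V" "B \<in> pushforward S T f V"
  then have "{x \<in> S. f x \<in> A} \<inter> {x \<in> S. f x \<in> B} \<in> V" "A \<inter> B \<subseteq> T"
    unfolding mem_pushforward by (auto intro: ultrafilter_on_Int[OF V])
  moreover have "{x \<in> S. f x \<in> A} \<inter> {x \<in> S. f x \<in> B} = {x \<in> S. f x \<in> A \<inter> B}" by blast
  ultimately show "A \<inter> B \<in> pushforward S T f V" by (simp add: mem_pushforward)
next
  fix A assume A: "A \<subseteq> T"
  have "S - {x \<in> S. f x \<in> A} = {x \<in> S. f x \<in> T - A}" using f by blast
  then show "A \<in> pushforward S T f V \<or> T - A \<in> pushforward S T f V"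
    using A ultrafilter_on_Diff[OF V, of "{x \<in> S. f x \<in> A}"] by (auto simp: mem_pushforward)
qed (auto simp: mem_pushforward ultrafilter_on_empty[OF V])

lemma pushforward_principal_uf:
  assumes "x \<in> S" "f ` S \<subseteq> T"
  shows "pushforward S T f (principal_uf S x) = principal_uf T (f x)"
  using assms by (auto simp: pushforward_def principal_uf_def)

section \<open>Ultrafilter convergence\<close>

lemma mem_ultra_conv:
  "(V, x) \<in> ultra_conv X \<longleftrightarrow> is_ultrafilter_on (topspace X) V \<and> x \<in> topspace X \<and>
     (\<forall>W. openin X W \<and> x \<in> W \<longrightarrow> W \<in> V)"
  by (simp add: ultra_conv_def)

lemma ultra_conv_principal: "x \<in> topspace X \<Longrightarrow> (principal_uf (topspace X) x, x) \<in> ultra_conv X"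
  using ultrafilter_on_principal[of x "topspace X"]
  by (auto simp: mem_ultra_conv principal_uf_def dest: openin_subset)

lemma ultra_conv_extending:
  assumes x: "x \<in> topspace X" and G: "G \<subseteq> Pow (topspace X)"
    and meets: "\<And>W F. openin X W \<Longrightarrow> x \<in> W \<Longrightarrow> finite F \<Longrightarrow> F \<subseteq> G \<Longrightarrow> W \<inter> \<Inter>F \<noteq> {}"
  obtains V where "(V, x) \<in> ultra_conv X" "G \<subseteq> V"
proof -
  define N where "N = {W. openin X W \<and> x \<in> W}"
  have "fip_on (topspace X) (N \<union> G)"
    unfolding fip_on_def
  proof (intro allI impI)
    fix F assume F: "finite F \<and> F \<subseteq> N \<union> G"
    define W where "W = topspace X \<inter> \<Inter>(F \<inter> N)"
    have "openin X W" unfolding W_def using F by (intro openin_Int_Inter) (auto simp: N_def)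
    moreover have "x \<in> W" using x by (auto simp: W_def N_def)
    ultimately have "W \<inter> \<Inter>(F - N) \<noteq> {}" using F by (intro meets) auto
    moreover have "W \<inter> \<Inter>(F - N) \<subseteq> topspace X \<inter> \<Inter>F" unfolding W_def by blast
    ultimately show "topspace X \<inter> \<Inter>F \<noteq> {}" by blast
  qed
  moreover have "N \<union> G \<subseteq> Pow (topspace X)" using G openin_subset by (auto simp: N_def)
  ultimately obtain V where V: "is_ultrafilter_on (topspace X) V" "N \<union> G \<subseteq> V"
    using ultrafilter_extending_fip_on by metis
  then have "(V, x) \<in> ultra_conv X" using x by (auto simp: mem_ultra_conv N_def)
  then show thesis using V(2) by (intro that) auto
qed

lemma openin_iff_ultra_conv:
  assumes A: "A \<subseteq> topspace X"
  shows "openin X A \<longleftrightarrow> (\<forall>V x. (V, x) \<in> ultra_conv X \<and> x \<in> A \<longrightarrow> A \<in> V)"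
proof
  assume conv: "\<forall>V x. (V, x) \<in> ultra_conv X \<and> x \<in> A \<longrightarrow> A \<in> V"
  show "openin X A"
  proof (subst openin_subopen, intro ballI)
    fix x assume "x \<in> A"
    show "\<exists>W. openin X W \<and> x \<in> W \<and> W \<subseteq> A"
    proof (rule ccontr)
      assume no_nbhd: "\<not> (\<exists>W. openin X W \<and> x \<in> W \<and> W \<subseteq> A)"
      obtain V where V: "(V, x) \<in> ultra_conv X" "{topspace X - A} \<subseteq> V"
      proof (rule ultra_conv_extending)
        show "x \<in> topspace X" using A \<open>x \<in> A\<close> by blast
        fix W F assume "openin X W" "x \<in> W" "finite F" "F \<subseteq> {topspace X - A}"
        then show "W \<inter> \<Inter>F \<noteq> {}" using no_nbhd openin_subset[of X W] by blast
      qed blast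
      moreover have "A \<in> V" using conv V(1) \<open>x \<in> A\<close> by blast
      ultimately show False using ultrafilter_on_not_Diff by (auto simp: mem_ultra_conv)
    qed
  qed
qed (auto simp: mem_ultra_conv)

definition final_conv :: "'a topology \<Rightarrow> 'b set \<Rightarrow> ('a \<Rightarrow> 'b) \<Rightarrow> ('b set set \<times> 'b) set" where
  "final_conv X S f = {(pushforward (topspace X) S f V, f x) | V x. (V, x) \<in> ultra_conv X}"

lemma mem_final_conv:
  "(U, y) \<in> final_conv X S f \<longleftrightarrow>
     (\<exists>V x. (V, x) \<in> ultra_conv X \<and> U = pushforward (topspace X) S f V \<and> y = f x)"
  by (auto simp: final_conv_def)

lemma ultra_conv_pushforward:
  assumes f: "continuous_map X Y f" and V: "(V, x) \<in> ultra_conv X"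
  shows "(pushforward (topspace X) (topspace Y) f V, f x) \<in> ultra_conv Y"
proof -
  have V': "is_ultrafilter_on (topspace X) V" "x \<in> topspace X"
    and nbhd: "\<And>W. openin X W \<Longrightarrow> x \<in> W \<Longrightarrow> W \<in> V"
    using V by (auto simp: mem_ultra_conv)
  have "f ` topspace X \<subseteq> topspace Y" using f by (simp add: continuous_map)
  moreover have "W \<in> pushforward (topspace X) (topspace Y) f V" if "openin Y W" "f x \<in> W" for W
    using that f V'(2) nbhd[of "{z \<in> topspace X. f z \<in> W}"]
    by (auto simp: mem_pushforward continuous_map dest: openin_subset)
  ultimately show ?thesis using V' by (auto simp: mem_ultra_conv intro: ultrafilter_on_pushforward)
qed

lemma continuous_map_iff_final_conv_subset:
  assumes f: "f ` topspace X \<subseteq> topspace Y"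
  shows "continuous_map X Y f \<longleftrightarrow> final_conv X (topspace Y) f \<subseteq> ultra_conv Y"
proof
  assume "continuous_map X Y f"
  then show "final_conv X (topspace Y) f \<subseteq> ultra_conv Y"
    by (auto simp: final_conv_def intro: ultra_conv_pushforward)
next
  assume final: "final_conv X (topspace Y) f \<subseteq> ultra_conv Y"
  have "openin X {x \<in> topspace X. f x \<in> W}" if W: "openin Y W" for W
  proof (subst openin_iff_ultra_conv, safe)
    fix V x assume V: "(V, x) \<in> ultra_conv X" and "f x \<in> W"
    have "(pushforward (topspace X) (topspace Y) f V, f x) \<in> ultra_conv Y"
      using final V by (auto simp: final_conv_def)
    then have "W \<in> pushforward (topspace X) (topspace Y) f V"
      using W \<open>f x \<in> W\<close> by (simp add: mem_ultra_conv)
    then show "{x \<in> topspace X. f x \<in> W} \<in> V" by (simp add: mem_pushforward)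
  qed
  then show "continuous_map X Y f" using f by (simp add: continuous_map)
qed

lemma ultra_conv_antimono:
  assumes "topspace T = topspace Y" "\<And>W. openin T W \<Longrightarrow> openin Y W"
  shows "ultra_conv Y \<subseteq> ultra_conv T"
  using assms by (auto simp: ultra_conv_def)

section \<open>Biquotient maps\<close>

lemma biquotient_mapD:
  assumes "biquotient_map X Y f" "y \<in> topspace Y"
    "\<And>W. W \<in> Cov \<Longrightarrow> openin X W" "{x \<in> topspace X. f x = y} \<subseteq> \<Union>Cov"
  obtains Fin N where "finite Fin" "Fin \<subseteq> Cov" "openin Y N" "y \<in> N" "N \<subseteq> (\<Union>W\<in>Fin. f ` W)"
proof -
  have "\<forall>y\<in>topspace Y. \<forall>Cov. (\<forall>W\<in>Cov. openin X W) \<and> {x \<in> topspace X. f x = y} \<subseteq> \<Union>Cov \<longrightarrow>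
          (\<exists>Fin N. finite Fin \<and> Fin \<subseteq> Cov \<and> openin Y N \<and> y \<in> N \<and> N \<subseteq> (\<Union>W\<in>Fin. f ` W))"
    using assms(1) by (simp add: biquotient_map_def)
  then show thesis using assms(2-4) that by blast
qed

lemma biquotient_map_cluster_point:
  assumes bq: "biquotient_map X Y f" and Uy: "(U, y) \<in> ultra_conv Y"
  obtains x where "x \<in> topspace X" "f x = y" "\<And>W. openin X W \<Longrightarrow> x \<in> W \<Longrightarrow> f ` W \<in> U"
proof -
  note cluster = that
  have U: "is_ultrafilter_on (topspace Y) U" "y \<in> topspace Y"
    and nbhd: "\<And>N. openin Y N \<Longrightarrow> y \<in> N \<Longrightarrow> N \<in> U"
    using Uy by (auto simp: mem_ultra_conv)
  have fX: "f ` topspace X \<subseteq> topspace Y" using bq by (simp add: biquotient_map_def)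
  show thesis
  proof (rule ccontr)
    assume no_cluster: "\<not> thesis"
    have "\<exists>W. openin X W \<and> x \<in> W \<and> f ` W \<notin> U" if "x \<in> topspace X" "f x = y" for x
    proof (rule ccontr)
      assume "\<nexists>W. openin X W \<and> x \<in> W \<and> f ` W \<notin> U"
      then have "\<And>W. openin X W \<Longrightarrow> x \<in> W \<Longrightarrow> f ` W \<in> U" by blast
      with no_cluster show False using cluster[OF that] by blast
    qed
    then obtain g where g: "\<And>x. x \<in> topspace X \<Longrightarrow> f x = y \<Longrightarrow>
        openin X (g x) \<and> x \<in> g x \<and> f ` g x \<notin> U"
      by metis
    let ?fibre = "{x \<in> topspace X. f x = y}"
    have "\<And>W. W \<in> g ` ?fibre \<Longrightarrow> openin X W" "?fibre \<subseteq> \<Union>(g ` ?fibre)"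
      using g by auto
    then obtain Fin N where Fin: "finite Fin" "Fin \<subseteq> g ` ?fibre"
      and N: "openin Y N" "y \<in> N" "N \<subseteq> (\<Union>W\<in>Fin. f ` W)"
      by (rule biquotient_mapD[OF bq U(2)])
    have img: "f ` W \<subseteq> topspace Y" if W: "W \<in> Fin" for W
    proof -
      obtain x where "x \<in> ?fibre" "W = g x" using W Fin(2) by blast
      then have "openin X W" using g by blast
      then show ?thesis using fX openin_subset by blast
    qed
    have "(\<Union>W\<in>Fin. f ` W) \<in> U"
      by (rule ultrafilter_on_mono[OF U(1) nbhd[OF N(1,2)] N(3)]) (rule UN_least[OF img])
    then obtain W where "W \<in> Fin" "f ` W \<in> U"
      using ultrafilter_on_finite_UN[OF U(1) Fin(1), of "\<lambda>W. f ` W"] img by blast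
    moreover from \<open>W \<in> Fin\<close> obtain x where "x \<in> ?fibre" "W = g x" using Fin(2) by blast
    ultimately show False using g by blast
  qed
qed

lemma ultra_conv_lift:
  assumes x: "x \<in> topspace X" and f: "f ` topspace X \<subseteq> S" and U: "is_ultrafilter_on S U"
    and img: "\<And>W. openin X W \<Longrightarrow> x \<in> W \<Longrightarrow> f ` W \<in> U"
  obtains V where "(V, x) \<in> ultra_conv X" "pushforward (topspace X) S f V = U"
proof -
  define pre where "pre A = {z \<in> topspace X. f z \<in> A}" for A
  obtain V where V: "(V, x) \<in> ultra_conv X" "pre ` U \<subseteq> V"
  proof (rule ultra_conv_extending[OF x])
    show "pre ` U \<subseteq> Pow (topspace X)" by (auto simp: pre_def)
    fix W F assume W: "openin X W" "x \<in> W" and F: "finite F" "F \<subseteq> pre ` U"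
    then obtain G where G: "G \<subseteq> U" "finite G" "F = pre ` G" by (meson finite_subset_image)
    have "f ` W \<inter> (S \<inter> \<Inter>G) \<in> U"
      using img[OF W] ultrafilter_on_finite_Inter[OF U G(2,1)] by (rule ultrafilter_on_Int[OF U])
    then have "f ` W \<inter> (S \<inter> \<Inter>G) \<noteq> {}" using ultrafilter_on_empty[OF U] by metis
    then obtain z where "z \<in> W" "f z \<in> \<Inter>G" by blast
    then show "W \<inter> \<Inter>F \<noteq> {}" using G(3) openin_subset[OF W(1)] by (auto simp: pre_def)
  qed
  have V': "is_ultrafilter_on (topspace X) V" using V(1) by (simp add: mem_ultra_conv)
  have "U \<subseteq> pushforward (topspace X) S f V"
  proof
    fix A assume "A \<in> U"
    then have "pre A \<in> V" "A \<subseteq> S" using V(2) ultrafilter_on_subset[OF U] by blast+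
    then show "A \<in> pushforward (topspace X) S f V" by (simp add: mem_pushforward pre_def)
  qed
  then have "U = pushforward (topspace X) S f V"
    by (rule ultrafilter_on_eq_if_subset[OF U ultrafilter_on_pushforward[OF f V']])
  then show thesis using V(1) by (intro that) auto
qed

lemma biquotient_map_imp_ultra_conv_subset_final:
  assumes bq: "biquotient_map X Y f"
  shows "ultra_conv Y \<subseteq> final_conv X (topspace Y) f"
proof safe
  fix U y assume Uy: "(U, y) \<in> ultra_conv Y"
  obtain x where x: "x \<in> topspace X" "f x = y" "\<And>W. openin X W \<Longrightarrow> x \<in> W \<Longrightarrow> f ` W \<in> U"
    using biquotient_map_cluster_point[OF bq Uy] by metis
  have "f ` topspace X \<subseteq> topspace Y" using bq by (simp add: biquotient_map_def)
  moreover have "is_ultrafilter_on (topspace Y) U" using Uy by (simp add: mem_ultra_conv)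
  ultimately obtain V where "(V, x) \<in> ultra_conv X" "pushforward (topspace X) (topspace Y) f V = U"
    using ultra_conv_lift[OF x(1)] x(3) by metis
  then show "(U, y) \<in> final_conv X (topspace Y) f" using x(2) unfolding mem_final_conv by blast
qed

lemma biquotient_map_if_ultra_conv_subset_final:
  assumes cont: "continuous_map X Y f" and surj: "f ` topspace X = topspace Y"
    and lift: "ultra_conv Y \<subseteq> final_conv X (topspace Y) f"
  shows "biquotient_map X Y f"
  unfolding biquotient_map_def
proof (intro conjI cont surj ballI allI impI)
  fix y Cov assume y: "y \<in> topspace Y"
    and Cov: "(\<forall>W\<in>Cov. openin X W) \<and> {x \<in> topspace X. f x = y} \<subseteq> \<Union>Cov"
  show "\<exists>Fin N. finite Fin \<and> Fin \<subseteq> Cov \<and> openin Y N \<and> y \<in> N \<and> N \<subseteq> (\<Union>W\<in>Fin. f ` W)"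
  proof (rule ccontr)
    assume no_cover: "\<not> ?thesis"
    define cpl where "cpl W = topspace Y - f ` W" for W
    obtain U where U: "(U, y) \<in> ultra_conv Y" "cpl ` Cov \<subseteq> U"
    proof (rule ultra_conv_extending[OF y])
      show "cpl ` Cov \<subseteq> Pow (topspace Y)" by (auto simp: cpl_def)
      fix N F assume N: "openin Y N" "y \<in> N" and F: "finite F" "F \<subseteq> cpl ` Cov"
      then obtain Fin where Fin: "Fin \<subseteq> Cov" "finite Fin" "F = cpl ` Fin" by (meson finite_subset_image)
      have "\<not> N \<subseteq> (\<Union>W\<in>Fin. f ` W)"
      proof
        assume "N \<subseteq> (\<Union>W\<in>Fin. f ` W)"
        with Fin(1,2) N show False using no_cover by blast
      qed
      then obtain z where "z \<in> N" "z \<notin> (\<Union>W\<in>Fin. f ` W)" by blast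
      then have "z \<in> N \<inter> \<Inter>(cpl ` Fin)" using openin_subset[OF N(1)] by (auto simp: cpl_def)
      then show "N \<inter> \<Inter>F \<noteq> {}" using Fin(3) by blast
    qed
    have "(U, y) \<in> final_conv X (topspace Y) f" using lift U(1) by blast
    then obtain V x where V: "(V, x) \<in> ultra_conv X"
      and UV: "U = pushforward (topspace X) (topspace Y) f V" and "y = f x"
      unfolding mem_final_conv by blast
    then obtain W where W: "W \<in> Cov" "x \<in> W" using Cov by (auto simp: mem_ultra_conv)
    have Vu: "is_ultrafilter_on (topspace X) V" and "W \<in> V"
      using Cov V W by (auto simp: mem_ultra_conv)
    have WX: "W \<subseteq> topspace X" using Cov W(1) openin_subset by blast
    have "{z \<in> topspace X. f z \<in> f ` W} \<in> V"
      by (rule ultrafilter_on_mono[OF Vu \<open>W \<in> V\<close>]) (use WX in auto)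
    moreover have "f ` W \<subseteq> topspace Y" using WX surj by blast
    ultimately have "f ` W \<in> U" unfolding UV mem_pushforward by blast
    moreover have "topspace Y - f ` W \<in> U" using U(2) W(1) by (auto simp: cpl_def)
    ultimately show False using ultrafilter_on_not_Diff U(1) by (auto simp: mem_ultra_conv)
  qed
qed

lemma biquotient_map_iff_ultra_conv_subset_final:
  assumes "continuous_map X Y f" "f ` topspace X = topspace Y"
  shows "biquotient_map X Y f \<longleftrightarrow> ultra_conv Y \<subseteq> final_conv X (topspace Y) f"
  using biquotient_map_imp_ultra_conv_subset_final biquotient_map_if_ultra_conv_subset_final[OF assms]
  by (rule iffI)

section \<open>Path components\<close>

lemma openin_pi0_top:
  "openin (pi0_top X) W \<longleftrightarrow>
     W \<subseteq> path_components_of X \<and> openin X {x \<in> topspace X. pc_proj X x \<in> W}"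
proof -
  have "istopology (\<lambda>W. W \<subseteq> path_components_of X \<and>
                        openin X {x \<in> topspace X. pc_proj X x \<in> W})"
    unfolding istopology_def
  proof (rule conjI; intro allI impI)
    fix S T
    assume "S \<subseteq> path_components_of X \<and> openin X {x \<in> topspace X. pc_proj X x \<in> S}"
      "T \<subseteq> path_components_of X \<and> openin X {x \<in> topspace X. pc_proj X x \<in> T}"
    moreover have "{x \<in> topspace X. pc_proj X x \<in> S \<inter> T} =
        {x \<in> topspace X. pc_proj X x \<in> S} \<inter> {x \<in> topspace X. pc_proj X x \<in> T}" by blast
    ultimately show "S \<inter> T \<subseteq> path_components_of X \<and>
        openin X {x \<in> topspace X. pc_proj X x \<in> S \<inter> T}" by auto
  next
    fix K
    assume "\<forall>S\<in>K. S \<subseteq> path_components_of X \<and> openin X {x \<in> topspace X. pc_proj X x \<in> S}"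
    moreover have "{x \<in> topspace X. pc_proj X x \<in> \<Union>K} =
        (\<Union>S\<in>K. {x \<in> topspace X. pc_proj X x \<in> S})" by blast
    ultimately show "\<Union>K \<subseteq> path_components_of X \<and>
        openin X {x \<in> topspace X. pc_proj X x \<in> \<Union>K}" by auto
  qed
  then show ?thesis unfolding pi0_top_def by simp
qed

lemma pc_proj_image: "pc_proj X ` topspace X = path_components_of X"
  unfolding pc_proj_def path_components_of_def by simp

lemma topspace_pi0_top: "topspace (pi0_top X) = path_components_of X"
proof -
  have "{x \<in> topspace X. pc_proj X x \<in> path_components_of X} = topspace X"
    using pc_proj_image[of X] by blast
  then have "openin (pi0_top X) (path_components_of X)" by (simp add: openin_pi0_top)
  then have "path_components_of X \<subseteq> topspace (pi0_top X)" by (rule openin_subset)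
  moreover have "topspace (pi0_top X) \<subseteq> path_components_of X"
    unfolding topspace_def openin_pi0_top by auto
  ultimately show ?thesis by blast
qed

lemma continuous_map_pc_proj: "continuous_map X (pi0_top X) (pc_proj X)"
  by (simp add: continuous_map topspace_pi0_top openin_pi0_top pc_proj_image)

lemma openin_pi0_top_if_continuous_map:
  assumes "continuous_map X T (pc_proj X)" "topspace T = path_components_of X" "openin T W"
  shows "openin (pi0_top X) W"
  using assms by (auto simp: openin_pi0_top continuous_map dest: openin_subset)

lemma pi0_ps_eq_final_conv: "pi0_ps X = final_conv X (path_components_of X) (pc_proj X)"
proof (intro equalityI subrelI)
  fix U c assume "(U, c) \<in> pi0_ps X"
  then have c: "c \<in> path_components_of X"
    and cases: "U = principal_uf (path_components_of X) c \<or>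
      (\<exists>V x. (V, x) \<in> ultra_conv X \<and>
             U = pushforward (topspace X) (path_components_of X) (pc_proj X) V \<and> c = pc_proj X x)"
    by (simp_all add: pi0_ps_def)
  from cases show "(U, c) \<in> final_conv X (path_components_of X) (pc_proj X)"
  proof
    assume U: "U = principal_uf (path_components_of X) c"
    obtain x where x: "x \<in> topspace X" "c = pc_proj X x" using c pc_proj_image[of X] by blast
    then have "U = pushforward (topspace X) (path_components_of X) (pc_proj X)
                     (principal_uf (topspace X) x)"
      using U pushforward_principal_uf[OF x(1), of "pc_proj X"] pc_proj_image[of X] by simp
    then show ?thesis
      using x ultra_conv_principal[OF x(1)] unfolding mem_final_conv by blast
  qed (unfold mem_final_conv)
next
  fix U c assume "(U, c) \<in> final_conv X (path_components_of X) (pc_proj X)"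
  then obtain V x where V: "(V, x) \<in> ultra_conv X"
    and U: "U = pushforward (topspace X) (path_components_of X) (pc_proj X) V" and c: "c = pc_proj X x"
    unfolding mem_final_conv by blast
  have "is_ultrafilter_on (topspace X) V" "x \<in> topspace X" using V by (simp_all add: mem_ultra_conv)
  then have "is_ultrafilter_on (path_components_of X) U" "c \<in> path_components_of X"
    unfolding U c using pc_proj_image[of X]
    by (auto intro: ultrafilter_on_pushforward[OF equalityD1[OF pc_proj_image]])
  then show "(U, c) \<in> pi0_ps X"
    unfolding pi0_ps_def mem_Collect_eq case_prod_conv using V U c by blast
qed

theorem proposition4p4:
  fixes X :: "'a topology"
  shows "((\<exists>T :: 'a set topology. topspace T = path_components_of X \<and> ultra_conv T = pi0_ps X)
           \<longleftrightarrow> pi0_ps X = ultra_conv (pi0_top X))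
       \<and> (pi0_ps X = ultra_conv (pi0_top X)
           \<longleftrightarrow> biquotient_map X (pi0_top X) (pc_proj X))"
proof -
  have ps_eq: "pi0_ps X = final_conv X (topspace (pi0_top X)) (pc_proj X)"
    by (simp add: pi0_ps_eq_final_conv topspace_pi0_top)
  have ps_sub: "pi0_ps X \<subseteq> ultra_conv (pi0_top X)"
    using continuous_map_pc_proj ps_eq
    by (simp add: continuous_map_iff_final_conv_subset topspace_pi0_top pc_proj_image)
  have "pi0_ps X = ultra_conv (pi0_top X)"
    if "topspace T = path_components_of X" "ultra_conv T = pi0_ps X" for T :: "'a set topology"
  proof -
    have "continuous_map X T (pc_proj X)"
      using that ps_eq
      by (simp add: continuous_map_iff_final_conv_subset topspace_pi0_top pc_proj_image)
    then have "ultra_conv (pi0_top X) \<subseteq> ultra_conv T"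
      using that(1) openin_pi0_top_if_continuous_map
      by (intro ultra_conv_antimono) (auto simp: topspace_pi0_top)
    then show ?thesis using ps_sub that(2) by blast
  qed
  moreover have "biquotient_map X (pi0_top X) (pc_proj X) \<longleftrightarrow> ultra_conv (pi0_top X) \<subseteq> pi0_ps X"
    unfolding ps_eq
    by (rule biquotient_map_iff_ultra_conv_subset_final[OF continuous_map_pc_proj])
       (simp add: topspace_pi0_top pc_proj_image)
  ultimately show ?thesis using ps_sub topspace_pi0_top by blast
qed

end
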